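(* Let $(K,C,S)$ and $(K',C',S')$ be the associated layered simplicial complexes of divided simplicial complexes, and suppose that the polyhedra $X=|K|$ and $X'=|K'|$ are filtered spaces with respective singular sets $\Sigma=|S|$ and $\Sigma'=|S'|$ whose formal codimensions coincide, $\operatorname{codim}_X\Sigma=\operatorname{codim}_{X'}\Sigma'$. If there exists a layered formal deformation between $(K,C,S)$ and $(K',C',S')$, then $(X,\Sigma)$ and $(X',\Sigma')$ are stratified homotopy equivalent.
   Context: A simplicial complex $K$ is a set of finite nonempty sets (simplices) such that every nonempty subset (face) of a simplex of $K$ lies in $K$; $\dim s=|s|-1$; $K^0$ is the set of vertices; $t<s$ means $t$ is a proper face of $s$; $|K|$ is the geometric realization (polyhedron). A simplex is principal in $K$ if it is not a proper face of any simplex of $K$. A simplex $s$ is free in $K$ if it is a proper face of a principal simplex $p$ of $K$ and of no other simplex of $K$. A layered simplicial complex is a triple $(K,C,S)$ where $C,S$ are disjoint subcomplexes of $K$; its intermediate simplices $\mathrm{IM}(K,C,S)$ are the simplices of $K$ lying in neither $C$ nor $S$. A divided simplicial complex is a pair $(K,S^0)$ with $S^0\subseteq K^0$; its associated layered complex is $(K,C,S)$, where $S$ consists of the simplices all of whose vertices lie in $S^0$ and $C$ of those all of whose vertices lie in $K^0-S^0$. An elementary $S$-collapse of $(K,C,S)$ replaces it by $(K-\{s,p\},C,S-\{s,p\})$, where $p\in S$ is principal in $K$ and $s$ is a face of $p$ free in $K$; an elementary $C$-collapse is defined symmetrically with $p\in C$ (giving $(K-\{s,p\},C-\{s,p\},S)$).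 If $(K,C,S)$ is associated to a divided complex $(K,S^0)$, an elementary intermediate collapse replaces it by $(K-\{s,p\},C,S)$, where (i) $p\in\mathrm{IM}(K,C,S)$, (ii) $p$ is principal in $K$, (iii) $s$ is a face of $p$ free in $K$, (iv) every simplex $t\in S$ with $t<p$ satisfies $t<s$. An elementary layered collapse between layered complexes associated to divided complexes is an elementary $S$-, $C$- or intermediate collapse; its inverse is an elementary layered expansion. A layered formal deformation from $(K,C,S)$ to $(K',C',S')$ is a finite sequence of layered complexes starting at $(K,C,S)$ and ending at $(K',C',S')$, each obtained from the previous one by an elementary layered collapse or an elementary layered expansion. A filtered space here is a pair $(X,\Sigma)$ of a Hausdorff space $X$ and closed subset $\Sigma$ (the singular set), together with a formal dimension $n$ of $X$ and a formal codimension $\operatorname{codim}_X\Sigma=k\geq 1$ (i.e. the filtration $X=X_n\supset X_{n-1}=\dots=X_{n-k}=\Sigma\supset X_{n-k-1}=\dots=\emptyset$). A stratified map $f:(X,\Sigma_X)\to(Y,\Sigma_Y)$ is a continuous map with $f(\Sigma_X)\subseteq\Sigma_Y$ and $f(X-\Sigma_X)\subseteq Y-\Sigma_Y$; it is codimension-preserving if $\operatorname{codim}\Sigma_X=\operatorname{codim}\Sigma_Y$. A stratified homotopy is a stratified map $(X\times I,\Sigma_X\times I)\to(Y,\Sigma_Y)$, $I=[0,1]$. A stratified homotopy equivalence is a codimension-preserving stratified map $f$ for which there is a stratified map $g:(Y,\Sigma_Y)\to(X,\Sigma_X)$ such that $g\circ f$ and $f\circ g$ are stratified homotopic to the identities.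 *)

theory Defs
  imports "HOL-Analysis.Analysis"
begin

definition simplicial_complex :: "'v set set \<Rightarrow> bool" where
  "simplicial_complex K \<longleftrightarrow>
     (\<forall>s\<in>K. finite s \<and> s \<noteq> {}) \<and> (\<forall>s\<in>K. \<forall>t. t \<subseteq> s \<and> t \<noteq> {} \<longrightarrow> t \<in> K)"

definition vertices :: "'v set set \<Rightarrow> 'v set" where
  "vertices K = \<Union>K"

definition principal :: "'v set set \<Rightarrow> 'v set \<Rightarrow> bool" where
  "principal K p \<longleftrightarrow> p \<in> K \<and> \<not> (\<exists>q\<in>K. p \<subset> q)"

definition free_simplex :: "'v set set \<Rightarrow> 'v set \<Rightarrow> bool" where
  "free_simplex K s \<longleftrightarrow> s \<in> K \<and>
     (\<exists>p. principal K p \<and> s \<subset> p \<and> (\<forall>q\<in>K. s \<subset> q \<longrightarrow> q = p))"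

text \<open>Geometric realization: points are barycentric coordinate functions, topologised
  as a subspace of the product space 'v => real.\<close>
definition realization :: "'v set set \<Rightarrow> ('v \<Rightarrow> real) set" where
  "realization K = (\<Union>s\<in>K. {x. (\<forall>v. 0 \<le> x v) \<and> (\<forall>v. v \<notin> s \<longrightarrow> x v = 0) \<and> sum x s = 1})"

type_synonym 'v layered = "'v set set \<times> 'v set set \<times> 'v set set"

definition divided :: "'v set set \<Rightarrow> 'v set \<Rightarrow> bool" where
  "divided K S0 \<longleftrightarrow> simplicial_complex K \<and> finite K \<and> S0 \<subseteq> vertices K"

definition S_part :: "'v set set \<Rightarrow> 'v set \<Rightarrow> 'v set set" where
  "S_part K S0 = {s \<in> K. s \<subseteq> S0}"

definition C_part :: "'v set set \<Rightarrow> 'v set \<Rightarrow> 'v set set" where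
  "C_part K S0 = {s \<in> K. s \<subseteq> vertices K - S0}"

definition assoc_layered :: "'v set set \<Rightarrow> 'v set \<Rightarrow> 'v layered" where
  "assoc_layered K S0 = (K, C_part K S0, S_part K S0)"

definition is_assoc_layered :: "'v layered \<Rightarrow> bool" where
  "is_assoc_layered L \<longleftrightarrow> (\<exists>K S0. divided K S0 \<and> L = assoc_layered K S0)"

definition elem_S_collapse :: "'v layered \<Rightarrow> 'v layered \<Rightarrow> bool" where
  "elem_S_collapse L L' \<longleftrightarrow> (case L of (K, C, S) \<Rightarrow>
     (\<exists>s p. p \<in> S \<and> principal K p \<and> s \<subset> p \<and> free_simplex K s \<and>
        L' = (K - {s, p}, C, S - {s, p})))"

definition elem_C_collapse :: "'v layered \<Rightarrow> 'v layered \<Rightarrow> bool" where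
  "elem_C_collapse L L' \<longleftrightarrow> (case L of (K, C, S) \<Rightarrow>
     (\<exists>s p. p \<in> C \<and> principal K p \<and> s \<subset> p \<and> free_simplex K s \<and>
        L' = (K - {s, p}, C - {s, p}, S)))"

definition elem_intermediate_collapse :: "'v layered \<Rightarrow> 'v layered \<Rightarrow> bool" where
  "elem_intermediate_collapse L L' \<longleftrightarrow> (case L of (K, C, S) \<Rightarrow>
     (\<exists>s p. p \<in> K \<and> p \<notin> C \<and> p \<notin> S \<and> principal K p \<and> s \<subset> p \<and> free_simplex K s \<and>
        (\<forall>t\<in>S. t \<subset> p \<longrightarrow> t \<subset> s) \<and>
        L' = (K - {s, p}, C, S)))"

definition elem_layered_collapse :: "'v layered \<Rightarrow> 'v layered \<Rightarrow> bool" where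
  "elem_layered_collapse L L' \<longleftrightarrow> is_assoc_layered L \<and> is_assoc_layered L' \<and>
     (elem_S_collapse L L' \<or> elem_C_collapse L L' \<or> elem_intermediate_collapse L L')"

definition layered_formal_deformation :: "'v layered \<Rightarrow> 'v layered \<Rightarrow> bool" where
  "layered_formal_deformation L L' \<longleftrightarrow>
     (\<exists>xs. xs \<noteq> [] \<and> hd xs = L \<and> last xs = L' \<and>
        (\<forall>i. Suc i < length xs \<longrightarrow>
           elem_layered_collapse (xs ! i) (xs ! Suc i) \<or> elem_layered_collapse (xs ! Suc i) (xs ! i)))"

text \<open>Filtered space (X, Sigma) with formal dimension n and formal codimension k of Sigma
  (Hausdorffness is automatic for subspaces of the product space 'v => real).\<close>
definition filtered_space :: "'a::topological_space set \<Rightarrow> 'a set \<Rightarrow> int \<Rightarrow> int \<Rightarrow> bool" where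
  "filtered_space X \<Sigma> n k \<longleftrightarrow> \<Sigma> \<subseteq> X \<and> closedin (top_of_set X) \<Sigma> \<and> 1 \<le> k"

definition stratified_map ::
  "'a::topological_space set \<Rightarrow> 'a set \<Rightarrow> 'b::topological_space set \<Rightarrow> 'b set \<Rightarrow> ('a \<Rightarrow> 'b) \<Rightarrow> bool" where
  "stratified_map X \<Sigma>X Y \<Sigma>Y f \<longleftrightarrow> continuous_on X f \<and> f ` X \<subseteq> Y \<and>
     f ` \<Sigma>X \<subseteq> \<Sigma>Y \<and> f ` (X - \<Sigma>X) \<subseteq> Y - \<Sigma>Y"

definition stratified_homotopic ::
  "'a::topological_space set \<Rightarrow> 'a set \<Rightarrow> 'b::topological_space set \<Rightarrow> 'b set \<Rightarrow>
   ('a \<Rightarrow> 'b) \<Rightarrow> ('a \<Rightarrow> 'b) \<Rightarrow> bool" where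
  "stratified_homotopic X \<Sigma>X Y \<Sigma>Y f g \<longleftrightarrow>
     (\<exists>h. stratified_map (X \<times> {0..1::real}) (\<Sigma>X \<times> {0..1}) Y \<Sigma>Y h \<and>
        (\<forall>x\<in>X. h (x, 0) = f x \<and> h (x, 1) = g x))"

definition stratified_homotopy_equivalence ::
  "'a::topological_space set \<Rightarrow> 'a set \<Rightarrow> int \<Rightarrow> 'b::topological_space set \<Rightarrow> 'b set \<Rightarrow> int \<Rightarrow>
   ('a \<Rightarrow> 'b) \<Rightarrow> bool" where
  "stratified_homotopy_equivalence X \<Sigma>X kX Y \<Sigma>Y kY f \<longleftrightarrow>
     kX = kY \<and> stratified_map X \<Sigma>X Y \<Sigma>Y f \<and>
     (\<exists>g. stratified_map Y \<Sigma>Y X \<Sigma>X g \<and>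
        stratified_homotopic X \<Sigma>X X \<Sigma>X (g \<circ> f) id \<and>
        stratified_homotopic Y \<Sigma>Y Y \<Sigma>Y (f \<circ> g) id)"

definition stratified_homotopy_equivalent ::
  "'a::topological_space set \<Rightarrow> 'a set \<Rightarrow> int \<Rightarrow> 'b::topological_space set \<Rightarrow> 'b set \<Rightarrow> int \<Rightarrow> bool" where
  "stratified_homotopy_equivalent X \<Sigma>X kX Y \<Sigma>Y kY \<longleftrightarrow>
     (\<exists>f. stratified_homotopy_equivalence X \<Sigma>X kX Y \<Sigma>Y kY f)"

end

theory Submission
  imports Defs
begin

text \<open>An elementary collapse removing a free face \<open>s\<close> of a principal simplex \<open>p\<close> is realised
  by a deformation retraction of \<open>|K|\<close> onto \<open>|K - {s, p}|\<close>: barycentric mass is pushed linearly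
  from the vertices of \<open>s\<close> onto those of \<open>p - s\<close> until the smallest \<open>s\<close>-coordinate vanishes.
  Only points of the open simplices \<open>s\<close> and \<open>p\<close> move, and for each of the three kinds of layered
  collapse either \<open>p\<close> lies in the singular part or neither \<open>s\<close> nor \<open>p - s\<close> does; hence no point
  ever enters or leaves \<open>|S|\<close>, and the retraction is a stratified homotopy equivalence.
  Stratified homotopy equivalence is an equivalence relation, so it survives the whole chain of
  collapses and expansions.\<close>

section \<open>Stratified homotopy equivalence\<close>

definition stratum_preserving ::
  "'a set \<Rightarrow> 'a set \<Rightarrow> 'b set \<Rightarrow> 'b set \<Rightarrow> ('a \<Rightarrow> 'b) \<Rightarrow> bool" where
  "stratum_preserving X \<Sigma>X Y \<Sigma>Y f \<longleftrightarrow> f ` \<Sigma>X \<subseteq> \<Sigma>Y \<and> f ` (X - \<Sigma>X) \<subseteq> Y - \<Sigma>Y"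

lemma stratified_map_iff_continuous_map:
  "stratified_map X \<Sigma>X Y \<Sigma>Y f \<longleftrightarrow>
     continuous_map (top_of_set X) (top_of_set Y) f \<and> stratum_preserving X \<Sigma>X Y \<Sigma>Y f"
  by (auto simp: stratified_map_def stratum_preserving_def image_subset_iff_funcset)

lemma stratum_preserving_compose:
  "stratum_preserving X \<Sigma>X Y \<Sigma>Y f \<Longrightarrow> stratum_preserving Y \<Sigma>Y Z \<Sigma>Z g \<Longrightarrow>
     stratum_preserving X \<Sigma>X Z \<Sigma>Z (g \<circ> f)"
  unfolding stratum_preserving_def by (auto simp: image_subset_iff)

lemma stratified_map_compose:
  "stratified_map X \<Sigma>X Y \<Sigma>Y f \<Longrightarrow> stratified_map Y \<Sigma>Y Z \<Sigma>Z g \<Longrightarrow>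
     stratified_map X \<Sigma>X Z \<Sigma>Z (g \<circ> f)"
  unfolding stratified_map_iff_continuous_map
  using continuous_map_compose stratum_preserving_compose by metis

lemma stratified_map_id: "stratified_map X \<Sigma>X X \<Sigma>X id"
  by (auto simp: stratified_map_def)

lemma stratum_preserving_cong:
  assumes "\<Sigma>X \<subseteq> X" "\<And>x. x \<in> X \<Longrightarrow> f x = g x"
  shows "stratum_preserving X \<Sigma>X Y \<Sigma>Y f \<longleftrightarrow> stratum_preserving X \<Sigma>X Y \<Sigma>Y g"
proof -
  have "f ` \<Sigma>X = g ` \<Sigma>X" "f ` (X - \<Sigma>X) = g ` (X - \<Sigma>X)"
    using assms by (force intro: image_cong)+
  then show ?thesis
    by (simp add: stratum_preserving_def)
qed

lemma continuous_on_comp_swap: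
  "continuous_on (B \<times> A) g \<Longrightarrow> continuous_on (A \<times> B) (g \<circ> prod.swap)"
  using continuous_on_compose[OF continuous_on_swap[of "A \<times> B"]] by (simp add: product_swap)

lemma continuous_on_swap_iff:
  "continuous_on (B \<times> A) (h \<circ> prod.swap) \<longleftrightarrow> continuous_on (A \<times> B) h"
  using continuous_on_comp_swap[of B A "h \<circ> prod.swap"] continuous_on_comp_swap[of A B h]
  by (auto simp: comp_assoc)

lemma stratified_map_homotopy_iff:
  "stratified_map (X \<times> {0..1}) (\<Sigma>X \<times> {0..1}) Y \<Sigma>Y h \<longleftrightarrow>
     continuous_map (prod_topology (top_of_set {0..1}) (top_of_set X)) (top_of_set Y) (h \<circ> prod.swap) \<and>
     (\<forall>t\<in>{0..1}. stratum_preserving X \<Sigma>X Y \<Sigma>Y (\<lambda>x. h (x, t)))"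
proof -
  have "continuous_map (prod_topology (top_of_set {0..1}) (top_of_set X)) (top_of_set Y) (h \<circ> prod.swap)
      \<longleftrightarrow> continuous_on (X \<times> {0..1}) h \<and> h ` (X \<times> {0..1}) \<subseteq> Y"
  proof -
    have "(h \<circ> prod.swap) ` ({0..1} \<times> X) = h ` (X \<times> {0..1})"
      by (simp only: image_comp[symmetric] product_swap)
    then show ?thesis
      by (simp add: subtopology_Times[symmetric] continuous_on_swap_iff
          image_subset_iff_funcset[symmetric] del: comp_apply)
  qed
  moreover have "stratified_map (X \<times> {0..1}) (\<Sigma>X \<times> {0..1}) Y \<Sigma>Y h \<longleftrightarrow>
      continuous_on (X \<times> {0..1}) h \<and> h ` (X \<times> {0..1}) \<subseteq> Y \<and>
      (\<forall>t\<in>{0..1}. stratum_preserving X \<Sigma>X Y \<Sigma>Y (\<lambda>x. h (x, t)))"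
    unfolding stratified_map_def stratum_preserving_def Times_Diff_distrib1[symmetric]
    by (auto simp: image_subset_iff)
  ultimately show ?thesis
    by argo
qed

lemma stratified_homotopic_iff_homotopic_with:
  assumes "\<Sigma>X \<subseteq> X"
  shows "stratified_homotopic X \<Sigma>X Y \<Sigma>Y f g \<longleftrightarrow>
           homotopic_with_canon (stratum_preserving X \<Sigma>X Y \<Sigma>Y) X Y f g"
proof -
  have "homotopic_with_canon (stratum_preserving X \<Sigma>X Y \<Sigma>Y) X Y f g \<longleftrightarrow>
      (\<exists>k. continuous_map (prod_topology (top_of_set {0..1::real}) (top_of_set X)) (top_of_set Y) k \<and>
         (\<forall>x\<in>X. k (0, x) = f x) \<and> (\<forall>x\<in>X. k (1, x) = g x) \<and>
         (\<forall>t\<in>{0..1}. stratum_preserving X \<Sigma>X Y \<Sigma>Y (\<lambda>x. k (t, x))))"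
    (is "_ \<longleftrightarrow> (\<exists>k. ?homotopy k)")
  proof (rule Homotopy.homotopic_with[where X = "top_of_set X", unfolded topspace_euclidean_subtopology])
    fix h k :: "'a \<Rightarrow> 'b"
    assume "\<And>x. x \<in> X \<Longrightarrow> h x = k x"
    then show "stratum_preserving X \<Sigma>X Y \<Sigma>Y h \<longleftrightarrow> stratum_preserving X \<Sigma>X Y \<Sigma>Y k"
      by (rule stratum_preserving_cong[OF assms])
  qed
  also have "\<dots> \<longleftrightarrow> stratified_homotopic X \<Sigma>X Y \<Sigma>Y f g"
  proof
    assume "\<exists>k. ?homotopy k"
    then obtain k where "?homotopy k"
      by blast
    then show "stratified_homotopic X \<Sigma>X Y \<Sigma>Y f g"
      unfolding stratified_homotopic_def stratified_map_homotopy_iff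
      by (intro exI[of _ "k \<circ> prod.swap"]) (simp add: comp_assoc)
  next
    assume "stratified_homotopic X \<Sigma>X Y \<Sigma>Y f g"
    then obtain h where "stratified_map (X \<times> {0..1::real}) (\<Sigma>X \<times> {0..1}) Y \<Sigma>Y h"
      "\<forall>x\<in>X. h (x, 0) = f x \<and> h (x, 1) = g x"
      unfolding stratified_homotopic_def by blast
    then have "?homotopy (h \<circ> prod.swap)"
      unfolding stratified_map_homotopy_iff by auto
    then show "\<exists>k. ?homotopy k"
      by blast
  qed
  finally show ?thesis ..
qed

lemma stratified_homotopic_id:
  assumes "\<And>x. x \<in> X \<Longrightarrow> f x = x"
  shows "stratified_homotopic X \<Sigma>X X \<Sigma>X f id"
proof -
  have "stratified_map (X \<times> {0..1::real}) (\<Sigma>X \<times> {0..1}) X \<Sigma>X fst"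
    unfolding stratified_map_def by (auto intro: continuous_on_fst continuous_on_id)
  with assms show ?thesis
    unfolding stratified_homotopic_def by (intro exI[of _ fst]) simp
qed

lemma stratified_homotopic_trans:
  assumes "\<Sigma>X \<subseteq> X"
    and "stratified_homotopic X \<Sigma>X Y \<Sigma>Y f g" "stratified_homotopic X \<Sigma>X Y \<Sigma>Y g h"
  shows "stratified_homotopic X \<Sigma>X Y \<Sigma>Y f h"
  using assms homotopic_with_trans by (metis stratified_homotopic_iff_homotopic_with)

lemma stratified_homotopic_compose_left:
  assumes "\<Sigma>X \<subseteq> X"
    and "stratified_homotopic X \<Sigma>X Y \<Sigma>Y f f'" "stratified_map Y \<Sigma>Y Z \<Sigma>Z g"
  shows "stratified_homotopic X \<Sigma>X Z \<Sigma>Z (g \<circ> f) (g \<circ> f')"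
  using assms homotopic_with_compose_continuous_map_left stratum_preserving_compose
  unfolding stratified_homotopic_iff_homotopic_with[OF assms(1)] stratified_map_iff_continuous_map
  by metis

lemma stratified_homotopic_compose_right:
  assumes "\<Sigma>X \<subseteq> X" "\<Sigma>Y \<subseteq> Y"
    and "stratified_homotopic Y \<Sigma>Y Z \<Sigma>Z g g'" "stratified_map X \<Sigma>X Y \<Sigma>Y f"
  shows "stratified_homotopic X \<Sigma>X Z \<Sigma>Z (g \<circ> f) (g' \<circ> f)"
  using assms homotopic_with_compose_continuous_map_right stratum_preserving_compose
  unfolding stratified_homotopic_iff_homotopic_with[OF assms(1)]
    stratified_homotopic_iff_homotopic_with[OF assms(2)] stratified_map_iff_continuous_map
  by metis

lemma stratified_homotopic_comp_inverses:
  assumes "\<Sigma>X \<subseteq> X" "\<Sigma>Y \<subseteq> Y"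
    and f: "stratified_map X \<Sigma>X Y \<Sigma>Y f" and g: "stratified_map Y \<Sigma>Y X \<Sigma>X g"
    and gf: "stratified_homotopic X \<Sigma>X X \<Sigma>X (g \<circ> f) id"
    and gf': "stratified_homotopic Y \<Sigma>Y Y \<Sigma>Y (g' \<circ> f') id"
  shows "stratified_homotopic X \<Sigma>X X \<Sigma>X ((g \<circ> g') \<circ> (f' \<circ> f)) id"
proof -
  have "stratified_homotopic X \<Sigma>X Y \<Sigma>Y ((g' \<circ> f') \<circ> f) (id \<circ> f)"
    using assms(1,2) gf' f by (rule stratified_homotopic_compose_right)
  then have "stratified_homotopic X \<Sigma>X X \<Sigma>X (g \<circ> ((g' \<circ> f') \<circ> f)) (g \<circ> (id \<circ> f))"
    using assms(1) g by (intro stratified_homotopic_compose_left)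
  then have "stratified_homotopic X \<Sigma>X X \<Sigma>X ((g \<circ> g') \<circ> (f' \<circ> f)) (g \<circ> f)"
    by (simp add: comp_assoc)
  with assms(1) show ?thesis
    using gf by (rule stratified_homotopic_trans)
qed

lemma stratified_homotopy_equivalent_refl: "stratified_homotopy_equivalent X \<Sigma>X k X \<Sigma>X k"
  unfolding stratified_homotopy_equivalent_def stratified_homotopy_equivalence_def
  using stratified_map_id stratified_homotopic_id[of X "id \<circ> id" \<Sigma>X] by fastforce

lemma stratified_homotopy_equivalent_sym:
  "stratified_homotopy_equivalent X \<Sigma>X k Y \<Sigma>Y k' \<Longrightarrow> stratified_homotopy_equivalent Y \<Sigma>Y k' X \<Sigma>X k"
  unfolding stratified_homotopy_equivalent_def stratified_homotopy_equivalence_def by blast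

lemma stratified_homotopy_equivalent_trans:
  assumes "\<Sigma>X \<subseteq> X" "\<Sigma>Y \<subseteq> Y" "\<Sigma>Z \<subseteq> Z"
    and "stratified_homotopy_equivalent X \<Sigma>X k Y \<Sigma>Y k'"
    and "stratified_homotopy_equivalent Y \<Sigma>Y k' Z \<Sigma>Z k''"
  shows "stratified_homotopy_equivalent X \<Sigma>X k Z \<Sigma>Z k''"
proof -
  obtain f g where f: "stratified_map X \<Sigma>X Y \<Sigma>Y f" and g: "stratified_map Y \<Sigma>Y X \<Sigma>X g"
    and gf: "stratified_homotopic X \<Sigma>X X \<Sigma>X (g \<circ> f) id"
    and fg: "stratified_homotopic Y \<Sigma>Y Y \<Sigma>Y (f \<circ> g) id" and "k = k'"
    using assms(4) unfolding stratified_homotopy_equivalent_def stratified_homotopy_equivalence_def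
    by blast
  obtain f' g' where f': "stratified_map Y \<Sigma>Y Z \<Sigma>Z f'" and g': "stratified_map Z \<Sigma>Z Y \<Sigma>Y g'"
    and gf': "stratified_homotopic Y \<Sigma>Y Y \<Sigma>Y (g' \<circ> f') id"
    and fg': "stratified_homotopic Z \<Sigma>Z Z \<Sigma>Z (f' \<circ> g') id" and "k' = k''"
    using assms(5) unfolding stratified_homotopy_equivalent_def stratified_homotopy_equivalence_def
    by blast
  have "stratified_homotopic X \<Sigma>X X \<Sigma>X ((g \<circ> g') \<circ> (f' \<circ> f)) id"
    using assms(1,2) f g gf gf' by (rule stratified_homotopic_comp_inverses)
  moreover have "stratified_homotopic Z \<Sigma>Z Z \<Sigma>Z ((f' \<circ> f) \<circ> (g \<circ> g')) id"
    using assms(3,2) g' f' fg' fg by (rule stratified_homotopic_comp_inverses)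
  ultimately have "stratified_homotopy_equivalence X \<Sigma>X k Z \<Sigma>Z k'' (f' \<circ> f)"
    unfolding stratified_homotopy_equivalence_def
    using \<open>k = k'\<close> \<open>k' = k''\<close> stratified_map_compose[OF f f'] stratified_map_compose[OF g' g] by blast
  then show ?thesis
    unfolding stratified_homotopy_equivalent_def by blast
qed

lemma stratified_homotopy_equivalent_deformation_retract:
  fixes H :: "'a::topological_space \<times> real \<Rightarrow> 'a"
  assumes "\<Sigma>X \<subseteq> X" "A \<subseteq> X" "\<Sigma>A = A \<inter> \<Sigma>X"
    and H_cont: "continuous_on (X \<times> {0..1}) H"
    and H_in: "\<And>x t. x \<in> X \<Longrightarrow> t \<in> {0..1} \<Longrightarrow> H (x, t) \<in> X"
    and H_stratum: "\<And>x t. x \<in> X \<Longrightarrow> t \<in> {0..1} \<Longrightarrow> H (x, t) \<in> \<Sigma>X \<longleftrightarrow> x \<in> \<Sigma>X"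
    and H_0: "\<And>x. x \<in> X \<Longrightarrow> H (x, 0) = x"
    and H_1: "\<And>x. x \<in> X \<Longrightarrow> H (x, 1) \<in> A"
    and H_1_fixes: "\<And>x. x \<in> A \<Longrightarrow> H (x, 1) = x"
  shows "stratified_homotopy_equivalent X \<Sigma>X k A \<Sigma>A k"
proof -
  define r where "r x = H (x, 1)" for x
  have "continuous_on X r"
    unfolding r_def by (rule continuous_on_compose2[OF H_cont]) (intro continuous_intros, auto)
  then have r: "stratified_map X \<Sigma>X A \<Sigma>A r"
    using assms(1,3) H_1 H_stratum[of _ 1] by (auto simp: stratified_map_def r_def)
  have incl: "stratified_map A \<Sigma>A X \<Sigma>X id"
    using assms(2,3) by (auto simp: stratified_map_def)
  have "continuous_on (X \<times> {0..1}) (\<lambda>z. H (fst z, 1 - snd z))"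
    by (rule continuous_on_compose2[OF H_cont]) (intro continuous_intros, auto)
  then have "stratified_map (X \<times> {0..1}) (\<Sigma>X \<times> {0..1}) X \<Sigma>X (\<lambda>z. H (fst z, 1 - snd z))"
    using assms(1) H_in H_stratum by (auto simp: stratified_map_def)
  then have "stratified_homotopic X \<Sigma>X X \<Sigma>X (id \<circ> r) id"
    unfolding stratified_homotopic_def using H_0
    by (intro exI[of _ "\<lambda>z. H (fst z, 1 - snd z)"]) (simp add: r_def)
  moreover have "stratified_homotopic A \<Sigma>A A \<Sigma>A (r \<circ> id) id"
    by (rule stratified_homotopic_id) (simp add: r_def H_1_fixes)
  ultimately show ?thesis
    unfolding stratified_homotopy_equivalent_def stratified_homotopy_equivalence_def
    using r incl by blast
qed

section \<open>Geometric realizations\<close>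

definition support :: "('v \<Rightarrow> real) \<Rightarrow> 'v set" where
  "support x = {v. x v \<noteq> 0}"

lemma sum_support:
  assumes "finite p" "support x \<subseteq> p"
  shows "sum x (support x) = sum x p"
  using assms by (intro sum.mono_neutral_left) (auto simp: support_def)

lemma mem_realizationI:
  assumes "p \<in> K" "\<And>v. 0 \<le> x v" "support x \<subseteq> p" "sum x p = 1"
  shows "x \<in> realization K"
  using assms unfolding realization_def support_def by blast

lemma mem_realization_iff:
  assumes K: "simplicial_complex K"
  shows "x \<in> realization K \<longleftrightarrow> (\<forall>v. 0 \<le> x v) \<and> support x \<in> K \<and> sum x (support x) = 1"
proof
  assume "x \<in> realization K"
  then obtain q where q: "q \<in> K" "\<forall>v. 0 \<le> x v" "\<forall>v. v \<notin> q \<longrightarrow> x v = 0" "sum x q = 1"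
    unfolding realization_def by blast
  have "finite q"
    using K q(1) unfolding simplicial_complex_def by blast
  moreover have sub: "support x \<subseteq> q"
    using q(3) unfolding support_def by blast
  ultimately have sum: "sum x (support x) = 1"
    using q(4) by (simp add: sum_support)
  then have "support x \<noteq> {}"
    by auto
  with K q(1) sub have "support x \<in> K"
    unfolding simplicial_complex_def by blast
  with q(2) sum show "(\<forall>v. 0 \<le> x v) \<and> support x \<in> K \<and> sum x (support x) = 1"
    by blast
qed (auto intro: mem_realizationI)

lemma realization_mono: "K' \<subseteq> K \<Longrightarrow> realization K' \<subseteq> realization K"
  unfolding realization_def by blast

lemma simplicial_complex_S_part: "simplicial_complex K \<Longrightarrow> simplicial_complex (S_part K S0)"
  unfolding simplicial_complex_def S_part_def by blast

lemma mem_realization_S_part_iff: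
  assumes "simplicial_complex K"
  shows "x \<in> realization (S_part K S0) \<longleftrightarrow> x \<in> realization K \<and> support x \<subseteq> S0"
  using mem_realization_iff[OF assms] mem_realization_iff[OF simplicial_complex_S_part[OF assms]]
  unfolding S_part_def by auto

section \<open>Elementary collapses\<close>

lemma continuous_on_Min_image:
  fixes f :: "'a::topological_space \<Rightarrow> 'b \<Rightarrow> 'c::linorder_topology"
  assumes "finite A" "A \<noteq> {}" "\<And>v. v \<in> A \<Longrightarrow> continuous_on U (\<lambda>x. f x v)"
  shows "continuous_on U (\<lambda>x. Min (f x ` A))"
  using assms
proof (induction A rule: finite_ne_induct)
  case (insert a A)
  then have "continuous_on U (\<lambda>x. min (f x a) (Min (f x ` A)))"
    by (intro continuous_intros) auto
  with insert show ?case
    by simp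
qed simp

definition respects_division :: "'v set \<Rightarrow> 'v set \<Rightarrow> 'v set \<Rightarrow> bool" where
  "respects_division S0 s p \<longleftrightarrow> p \<subseteq> S0 \<or> \<not> s \<subseteq> S0 \<and> \<not> p - s \<subseteq> S0"

locale simplicial_collapse =
  fixes K :: "'v set set" and s p :: "'v set"
  assumes complex: "simplicial_complex K"
    and face_in: "s \<in> K" and simplex_in: "p \<in> K" and proper_face: "s \<subset> p"
    and free: "\<And>q. q \<in> K \<Longrightarrow> s \<subset> q \<Longrightarrow> q = p"
begin

lemma finite_simplex: "finite p"
  using complex simplex_in unfolding simplicial_complex_def by blast

lemma finite_face: "finite s"
  using finite_simplex proper_face by (meson finite_subset psubset_imp_subset)

lemma face_nonempty: "s \<noteq> {}"
  using complex face_in unfolding simplicial_complex_def by blast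

lemma simplicial_complex_collapsed: "simplicial_complex (K - {s, p})"
  unfolding simplicial_complex_def
proof (intro conjI ballI allI impI)
  fix q t
  assume q: "q \<in> K - {s, p}" and t: "t \<subseteq> q \<and> t \<noteq> {}"
  have "\<not> s \<subset> q"
    using q free by blast
  with q t proper_face have "t \<noteq> s" "t \<noteq> p"
    by auto
  moreover have "t \<in> K"
    using q t complex unfolding simplicial_complex_def by blast
  ultimately show "t \<in> K - {s, p}"
    by blast
qed (use complex in \<open>auto simp: simplicial_complex_def\<close>)

lemma card_complement_pos: "0 < card (p - s)"
  using finite_simplex proper_face by (simp add: card_gt_0_iff)

definition face_min :: "('v \<Rightarrow> real) \<Rightarrow> real" where
  "face_min x = Min (x ` s)"

lemma face_min_le: "v \<in> s \<Longrightarrow> face_min x \<le> x v"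
  using finite_face by (simp add: face_min_def)

lemma face_min_attained: "\<exists>v\<in>s. x v = face_min x"
proof -
  have "face_min x \<in> x ` s"
    unfolding face_min_def using finite_face face_nonempty by (intro Min_in) auto
  then show ?thesis
    by (metis imageE)
qed

lemma face_min_nonneg: "\<forall>v. 0 \<le> x v \<Longrightarrow> 0 \<le> face_min x"
  using face_min_attained by metis

lemma support_eq_face_or_simplex:
  assumes "x \<in> realization K" "0 < face_min x"
  shows "support x = s \<or> support x = p"
proof -
  have "s \<subseteq> support x"
    using assms(2) by (auto simp: support_def dest: face_min_le[of _ x])
  moreover have "support x \<in> K"
    using assms(1) mem_realization_iff[OF complex] by blast
  ultimately show ?thesis
    using free by blast
qed

lemma face_min_eq_0_iff:
  assumes x: "x \<in> realization K"
  shows "face_min x = 0 \<longleftrightarrow> x \<in> realization (K - {s, p})"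
proof
  assume "face_min x = 0"
  then obtain v where "v \<in> s" "x v = 0"
    using face_min_attained by metis
  then have "support x \<noteq> s" "support x \<noteq> p"
    using proper_face by (auto simp: support_def)
  then show "x \<in> realization (K - {s, p})"
    using x by (simp add: mem_realization_iff[OF complex] mem_realization_iff[OF simplicial_complex_collapsed])
next
  assume "x \<in> realization (K - {s, p})"
  then have "support x \<noteq> s" "support x \<noteq> p" "\<forall>v. 0 \<le> x v"
    by (simp_all add: mem_realization_iff[OF simplicial_complex_collapsed])
  then have "\<not> 0 < face_min x" "0 \<le> face_min x"
    using support_eq_face_or_simplex[OF x] face_min_nonneg by blast+
  then show "face_min x = 0"
    by simp
qed

text \<open>The mass \<open>t * face_min x\<close> taken from each vertex of \<open>s\<close> is spread evenly over \<open>p - s\<close>,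
  so the coordinates keep summing to 1.\<close>
definition push :: "('v \<Rightarrow> real) \<Rightarrow> real \<Rightarrow> 'v \<Rightarrow> real" where
  "push x t v =
     (if v \<in> s then x v - t * face_min x
      else if v \<in> p then x v + t * (card s / card (p - s)) * face_min x
      else x v)"

lemma push_0 [simp]: "push x 0 = x"
  by (rule ext) (simp add: push_def)

lemma push_eq_self: "face_min x = 0 \<Longrightarrow> push x t = x"
  by (rule ext) (simp add: push_def)

lemma push_outside: "v \<notin> p \<Longrightarrow> push x t v = x v"
  using proper_face by (auto simp: push_def)

lemma push_nonneg:
  assumes "\<forall>v. 0 \<le> x v" "0 \<le> t" "t \<le> 1"
  shows "0 \<le> push x t v"
proof (cases "v \<in> s")
  case True
  have "t * face_min x \<le> face_min x"
    using assms face_min_nonneg by (simp add: mult_left_le_one_le)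
  with True show ?thesis
    using face_min_le[OF True, of x] by (simp add: push_def)
next
  case False
  then show ?thesis
    using assms face_min_nonneg by (simp add: push_def)
qed

lemma sum_push: "sum (push x t) p = sum x p"
proof -
  have spread: "card (p - s) * (t * (card s / card (p - s)) * face_min x) = card s * (t * face_min x)"
    using card_complement_pos by (simp add: field_simps)
  have "sum (push x t) p = sum (push x t) (p - s) + sum (push x t) s"
    using proper_face finite_simplex by (meson psubset_imp_subset sum.subset_diff)
  also have "\<dots> = (sum x (p - s) + card (p - s) * (t * (card s / card (p - s)) * face_min x))
      + (sum x s - card s * (t * face_min x))"
    by (simp add: push_def sum.distrib sum_subtractf)
  also have "\<dots> = sum x (p - s) + sum x s"
    using spread by simp
  also have "\<dots> = sum x p"
    using proper_face finite_simplex by (metis psubset_imp_subset sum.subset_diff)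
  finally show ?thesis .
qed

lemma support_push_subset: "support x \<subseteq> p \<Longrightarrow> support (push x t) \<subseteq> p"
  using push_outside by (fastforce simp: support_def)

lemma complement_subset_support_push:
  assumes "\<forall>v. 0 \<le> x v" "0 < t" "0 < face_min x"
  shows "p - s \<subseteq> support (push x t)"
proof
  fix v
  assume v: "v \<in> p - s"
  have "0 < card s"
    using finite_face face_nonempty by (simp add: card_gt_0_iff)
  then have "0 < t * (card s / card (p - s)) * face_min x"
    using assms(2,3) card_complement_pos by simp
  then have "0 < push x t v"
    using v assms(1) by (simp add: push_def add_nonneg_pos)
  then show "v \<in> support (push x t)"
    by (simp add: support_def)
qed

lemma push_mem_realization:
  assumes x: "x \<in> realization K" and t: "0 \<le> t" "t \<le> 1"
  shows "push x t \<in> realization K"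
proof (cases "face_min x = 0")
  case True
  with x show ?thesis
    by (simp add: push_eq_self)
next
  case False
  have x_props: "\<forall>v. 0 \<le> x v" "sum x (support x) = 1"
    using x mem_realization_iff[OF complex] by blast+
  then have "0 < face_min x"
    using False face_min_nonneg[OF x_props(1)] by linarith
  then have "support x \<subseteq> p"
    using support_eq_face_or_simplex[OF x] proper_face by blast
  then have "support (push x t) \<subseteq> p" "sum (push x t) p = 1"
    using support_push_subset sum_push x_props(2) finite_simplex by (auto simp: sum_support)
  then show ?thesis
    using simplex_in push_nonneg[OF x_props(1) t] by (intro mem_realizationI) auto
qed

lemma push_1_mem_collapsed:
  assumes x: "x \<in> realization K"
  shows "push x 1 \<in> realization (K - {s, p})"
proof -
  have y: "push x 1 \<in> realization K"
    using push_mem_realization[OF x] by simp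
  obtain v where v: "v \<in> s" "x v = face_min x"
    using face_min_attained by metis
  then have "face_min (push x 1) \<le> 0"
    using face_min_le[of v "push x 1"] by (simp add: push_def)
  moreover have "0 \<le> face_min (push x 1)"
    using y mem_realization_iff[OF complex] face_min_nonneg by blast
  ultimately show ?thesis
    using face_min_eq_0_iff[OF y] by simp
qed

lemma support_push_subset_iff:
  assumes division: "respects_division S0 s p"
    and x: "x \<in> realization K" and t: "0 \<le> t" "t \<le> 1"
  shows "support (push x t) \<subseteq> S0 \<longleftrightarrow> support x \<subseteq> S0"
proof (cases "face_min x = 0 \<or> t = 0")
  case True
  then show ?thesis
    by (auto simp: push_eq_self)
next
  case False
  have x_nonneg: "\<forall>v. 0 \<le> x v"
    using x mem_realization_iff[OF complex] by blast
  then have pos: "0 < face_min x" "0 < t"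
    using False face_min_nonneg[OF x_nonneg] t by auto
  then have "support x = s \<or> support x = p"
    using support_eq_face_or_simplex[OF x] by blast
  then have "s \<subseteq> support x" "support x \<subseteq> p"
    using proper_face by auto
  moreover have "p - s \<subseteq> support (push x t)" "support (push x t) \<subseteq> p"
    using complement_subset_support_push[OF x_nonneg pos(2,1)] support_push_subset calculation(2)
    by blast+
  ultimately show ?thesis
    using division unfolding respects_division_def by blast
qed

lemma continuous_on_face_min: "continuous_on UNIV face_min"
  unfolding face_min_def
  by (rule continuous_on_Min_image[OF finite_face face_nonempty]) (rule continuous_on_product_coordinates)

lemma continuous_on_push: "continuous_on UNIV (\<lambda>z. push (fst z) (snd z))"
proof (rule continuous_on_coordinatewise_then_product)
  fix v
  have face_min_fst: "continuous_on UNIV (\<lambda>z :: ('v \<Rightarrow> real) \<times> real. face_min (fst z))"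
    by (rule continuous_on_compose2[OF continuous_on_face_min]) (intro continuous_intros, auto)
  have coordinate_fst: "continuous_on UNIV (\<lambda>z :: ('v \<Rightarrow> real) \<times> real. fst z v)"
    by (rule continuous_on_compose2[OF continuous_on_product_coordinates]) (intro continuous_intros, auto)
  show "continuous_on UNIV (\<lambda>z. push (fst z) (snd z) v)"
    unfolding push_def using card_complement_pos
    by (cases "v \<in> s"; cases "v \<in> p"; simp; intro continuous_intros face_min_fst coordinate_fst; simp)
qed

lemma respects_division_if_disjoint: "p \<inter> S0 = {} \<Longrightarrow> respects_division S0 s p"
  using face_nonempty proper_face unfolding respects_division_def by blast

lemma respects_division_if_S_faces_below_face:
  assumes below: "\<forall>t\<in>S_part K S0. t \<subset> p \<longrightarrow> t \<subset> s"
  shows "respects_division S0 s p"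
proof -
  have "\<not> s \<subseteq> S0"
    using below face_in proper_face by (auto simp: S_part_def)
  moreover have "\<not> p - s \<subseteq> S0"
  proof
    assume "p - s \<subseteq> S0"
    moreover have "p - s \<in> K"
      using complex simplex_in proper_face unfolding simplicial_complex_def by blast
    moreover have "p - s \<subset> p"
      using face_nonempty proper_face by blast
    ultimately have "p - s \<subset> s"
      using below by (auto simp: S_part_def)
    then show False
      using proper_face by blast
  qed
  ultimately show ?thesis
    unfolding respects_division_def by blast
qed

lemma S_part_collapsed:
  "respects_division S0 s p \<Longrightarrow> \<not> p \<subseteq> S0 \<Longrightarrow> S_part (K - {s, p}) S0 = S_part K S0"
  using proper_face by (auto simp: S_part_def respects_division_def)

theorem stratified_homotopy_equivalent_collapse:
  assumes division: "respects_division S0 s p"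
  shows "stratified_homotopy_equivalent (realization K) (realization (S_part K S0)) k
           (realization (K - {s, p})) (realization (S_part (K - {s, p}) S0)) k"
proof (rule stratified_homotopy_equivalent_deformation_retract[where H = "\<lambda>z. push (fst z) (snd z)"])
  have collapsed_sub: "realization (K - {s, p}) \<subseteq> realization K"
    by (rule realization_mono) blast
  show "realization (S_part K S0) \<subseteq> realization K"
    by (rule realization_mono) (auto simp: S_part_def)
  show "realization (K - {s, p}) \<subseteq> realization K"
    by (fact collapsed_sub)
  show "realization (S_part (K - {s, p}) S0) = realization (K - {s, p}) \<inter> realization (S_part K S0)"
    using collapsed_sub mem_realization_S_part_iff[OF complex]
      mem_realization_S_part_iff[OF simplicial_complex_collapsed] by blast
  show "continuous_on (realization K \<times> {0..1}) (\<lambda>z. push (fst z) (snd z))"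
    using continuous_on_push by (rule continuous_on_subset) simp
  show "push (fst (x, 1)) (snd (x, 1)) = x" if "x \<in> realization (K - {s, p})" for x
    using that collapsed_sub face_min_eq_0_iff push_eq_self by auto
  fix x and t :: real
  assume x: "x \<in> realization K"
  show "push (fst (x, 0)) (snd (x, 0)) = x"
    by simp
  show "push (fst (x, 1)) (snd (x, 1)) \<in> realization (K - {s, p})"
    using push_1_mem_collapsed[OF x] by simp
  assume "t \<in> {0..1}"
  then have t: "0 \<le> t" "t \<le> 1"
    by auto
  show "push (fst (x, t)) (snd (x, t)) \<in> realization K"
    using push_mem_realization[OF x t] by simp
  show "push (fst (x, t)) (snd (x, t)) \<in> realization (S_part K S0) \<longleftrightarrow> x \<in> realization (S_part K S0)"
    using push_mem_realization[OF x t] support_push_subset_iff[OF division x t] x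
    by (simp add: mem_realization_S_part_iff[OF complex])
qed

end

section \<open>Layered collapses and formal deformations\<close>

lemma simplicial_collapse_if_free:
  assumes "simplicial_complex K" "p \<in> K" "s \<subset> p" "free_simplex K s"
  shows "simplicial_collapse K s p"
proof
  obtain p' where "s \<in> K" "s \<subset> p'" "\<forall>q\<in>K. s \<subset> q \<longrightarrow> q = p'"
    using assms(4) unfolding free_simplex_def by blast
  then show "s \<in> K" "\<And>q. q \<in> K \<Longrightarrow> s \<subset> q \<Longrightarrow> q = p"
    using assms(2,3) by metis+
qed (use assms in auto)

lemma S_part_diff: "S_part (K - A) S0 = S_part K S0 - A"
  by (auto simp: S_part_def)

lemma elem_layered_collapse_imp_simplicial_collapse:
  assumes "elem_layered_collapse L L'"
  obtains K S0 s p where "divided K S0" "L = assoc_layered K S0" "simplicial_collapse K s p"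
    "respects_division S0 s p" "fst L' = K - {s, p}" "snd (snd L') = S_part (K - {s, p}) S0"
proof -
  obtain K S0 where d: "divided K S0" and L: "L = assoc_layered K S0"
    using assms unfolding elem_layered_collapse_def is_assoc_layered_def by blast
  have K: "simplicial_complex K"
    using d by (simp add: divided_def)
  have L_eq: "L = (K, C_part K S0, S_part K S0)"
    using L by (simp add: assoc_layered_def)
  consider (S) "elem_S_collapse L L'" | (C) "elem_C_collapse L L'" | (I) "elem_intermediate_collapse L L'"
    using assms unfolding elem_layered_collapse_def by blast
  then show ?thesis
  proof cases
    case S
    then obtain s p where sp: "p \<in> S_part K S0" "s \<subset> p" "free_simplex K s"
      "L' = (K - {s, p}, C_part K S0, S_part K S0 - {s, p})"
      unfolding L_eq elem_S_collapse_def by auto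
    then have "simplicial_collapse K s p"
      using K by (intro simplicial_collapse_if_free) (auto simp: S_part_def)
    moreover have "respects_division S0 s p"
      using sp(1) by (simp add: respects_division_def S_part_def)
    ultimately show ?thesis
      using sp(4) by (intro that[OF d L]) (simp_all add: S_part_diff)
  next
    case C
    then obtain s p where sp: "p \<in> C_part K S0" "s \<subset> p" "free_simplex K s"
      "L' = (K - {s, p}, C_part K S0 - {s, p}, S_part K S0)"
      unfolding L_eq elem_C_collapse_def by auto
    then interpret simplicial_collapse K s p
      using K by (intro simplicial_collapse_if_free) (auto simp: C_part_def)
    have division: "respects_division S0 s p"
      using sp(1) by (intro respects_division_if_disjoint) (auto simp: C_part_def)
    moreover have "\<not> p \<subseteq> S0"
      using sp(1,2) by (auto simp: C_part_def)
    ultimately have "S_part (K - {s, p}) S0 = S_part K S0"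
      by (rule S_part_collapsed)
    with sp(4) show ?thesis
      using division simplicial_collapse_axioms by (intro that[OF d L]) auto
  next
    case I
    then obtain s p where sp: "p \<in> K" "p \<notin> S_part K S0" "s \<subset> p" "free_simplex K s"
      "\<forall>t\<in>S_part K S0. t \<subset> p \<longrightarrow> t \<subset> s" "L' = (K - {s, p}, C_part K S0, S_part K S0)"
      unfolding L_eq elem_intermediate_collapse_def by auto
    then interpret simplicial_collapse K s p
      using K by (intro simplicial_collapse_if_free) auto
    have division: "respects_division S0 s p"
      using sp(5) by (rule respects_division_if_S_faces_below_face)
    moreover have "\<not> p \<subseteq> S0"
      using sp(1,2) by (simp add: S_part_def)
    ultimately have "S_part (K - {s, p}) S0 = S_part K S0"
      by (rule S_part_collapsed)
    with sp(6) show ?thesis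
      using division simplicial_collapse_axioms by (intro that[OF d L]) auto
  qed
qed

definition layered_polyhedron :: "'v layered \<Rightarrow> ('v \<Rightarrow> real) set" where
  "layered_polyhedron L = realization (fst L)"

definition layered_singular_set :: "'v layered \<Rightarrow> ('v \<Rightarrow> real) set" where
  "layered_singular_set L = realization (snd (snd L))"

lemma layered_singular_set_subset:
  assumes "is_assoc_layered L"
  shows "layered_singular_set L \<subseteq> layered_polyhedron L"
proof -
  obtain K S0 where "L = assoc_layered K S0"
    using assms unfolding is_assoc_layered_def by blast
  then show ?thesis
    unfolding layered_polyhedron_def layered_singular_set_def assoc_layered_def
    by (simp add: S_part_def realization_mono)
qed

lemma stratified_homotopy_equivalent_elem_layered_collapse:
  assumes "elem_layered_collapse L L'"
  shows "stratified_homotopy_equivalent (layered_polyhedron L) (layered_singular_set L) k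
           (layered_polyhedron L') (layered_singular_set L') k"
proof -
  obtain K S0 s p where "L = assoc_layered K S0" "simplicial_collapse K s p"
    "respects_division S0 s p" "fst L' = K - {s, p}" "snd (snd L') = S_part (K - {s, p}) S0"
    using assms by (rule elem_layered_collapse_imp_simplicial_collapse)
  then show ?thesis
    using simplicial_collapse.stratified_homotopy_equivalent_collapse[of K s p S0 k]
    by (simp add: layered_polyhedron_def layered_singular_set_def assoc_layered_def)
qed

lemma stratified_homotopy_equivalent_layered_formal_deformation:
  assumes "layered_formal_deformation L L'" "is_assoc_layered L"
  shows "stratified_homotopy_equivalent (layered_polyhedron L) (layered_singular_set L) k
           (layered_polyhedron L') (layered_singular_set L') k"
proof -
  obtain xs where xs: "xs \<noteq> []" "hd xs = L" "last xs = L'"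
    and steps: "\<And>i. Suc i < length xs \<Longrightarrow>
      elem_layered_collapse (xs ! i) (xs ! Suc i) \<or> elem_layered_collapse (xs ! Suc i) (xs ! i)"
    using assms(1) unfolding layered_formal_deformation_def by blast
  have "stratified_homotopy_equivalent (layered_polyhedron L) (layered_singular_set L) k
          (layered_polyhedron (xs ! i)) (layered_singular_set (xs ! i)) k" if "i < length xs" for i
    using that
  proof (induction i)
    case 0
    then show ?case
      using xs(1,2) by (simp add: hd_conv_nth stratified_homotopy_equivalent_refl)
  next
    case (Suc i)
    have step: "elem_layered_collapse (xs ! i) (xs ! Suc i) \<or> elem_layered_collapse (xs ! Suc i) (xs ! i)"
      using steps Suc.prems .
    then have "is_assoc_layered (xs ! i)" "is_assoc_layered (xs ! Suc i)"
      unfolding elem_layered_collapse_def by blast+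
    moreover have "stratified_homotopy_equivalent (layered_polyhedron (xs ! i)) (layered_singular_set (xs ! i)) k
        (layered_polyhedron (xs ! Suc i)) (layered_singular_set (xs ! Suc i)) k"
      using step stratified_homotopy_equivalent_elem_layered_collapse stratified_homotopy_equivalent_sym
      by blast
    moreover have "stratified_homotopy_equivalent (layered_polyhedron L) (layered_singular_set L) k
        (layered_polyhedron (xs ! i)) (layered_singular_set (xs ! i)) k"
      using Suc by simp
    ultimately show ?case
      using layered_singular_set_subset[OF assms(2)] layered_singular_set_subset
      by (metis stratified_homotopy_equivalent_trans)
  qed
  from this[of "length xs - 1"] show ?thesis
    using xs(1,3) by (simp add: last_conv_nth)
qed

theorem theorem6p2:
  fixes K K' :: "'v set set" and S0 S0' :: "'v set" and n n' k k' :: int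
  assumes "divided K S0" and "divided K' S0'"
    and "filtered_space (realization K) (realization (S_part K S0)) n k"
    and "filtered_space (realization K') (realization (S_part K' S0')) n' k'"
    and "k = k'"
    and "layered_formal_deformation (assoc_layered K S0) (assoc_layered K' S0')"
  shows "stratified_homotopy_equivalent
           (realization K) (realization (S_part K S0)) k
           (realization K') (realization (S_part K' S0')) k'"
proof -
  have "is_assoc_layered (assoc_layered K S0)"
    using assms(1) unfolding is_assoc_layered_def by blast
  with assms(6) have "stratified_homotopy_equivalent
      (layered_polyhedron (assoc_layered K S0)) (layered_singular_set (assoc_layered K S0)) k
      (layered_polyhedron (assoc_layered K' S0')) (layered_singular_set (assoc_layered K' S0')) k"
    by (rule stratified_homotopy_equivalent_layered_formal_deformation)
  then show ?thesis
    using assms(5) by (simp add: layered_polyhedron_def layered_singular_set_def assoc_layered_def)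
qed

end
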